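(* Let $r>0$ and $d_0>0$. There exists $s_0$ such that for all $s\ge s_0$, for every $\Gamma\in\mathcal{H}$ and all non-empty compact sets $K,K'\subseteq\mathbb{R}^2$ with $d_H(K,K')<d_0$: if $K\in\mathcal{LA}_s(\Gamma)$, then $K'\in\mathcal{LA}_r(\Gamma)$.
   Context: $d_H$ is the Hausdorff distance. $\mathcal{H}$ is the set of homothety types: non-empty compact subsets of $\mathbb{R}^2$ modulo the group generated by translations and homotheties of positive ratio. For $r>0$, $\Gamma\in\mathcal{H}$ and non-empty compact $K\subseteq\mathbb{R}^2$, $K$ is an $r$-large approximate of $\Gamma$, written $K\in\mathcal{LA}_r(\Gamma)$, if $\mathrm{diam}(K)>r$ and there is a set $\hat\Gamma\in\Gamma$ of diameter $1$ with $d_H(K/\mathrm{diam}(K),\hat\Gamma)<1/r$. *)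

theory Defs
  imports "HOL-Analysis.Analysis"
begin

definition hausdorff_dist :: "'a::metric_space set \<Rightarrow> 'a set \<Rightarrow> real" where
  "hausdorff_dist A B = max (SUP a\<in>A. infdist a B) (SUP b\<in>B. infdist b A)"

definition nc_set :: "(real^2) set \<Rightarrow> bool" where
  "nc_set K \<longleftrightarrow> K \<noteq> {} \<and> compact K"

text \<open>The group generated by translations and positive homotheties of the plane
  consists exactly of the maps x \<mapsto> t + c x with c > 0.  A homothety type is an
  equivalence class of non-empty compact sets under this group action.\<close>
definition homothety_class :: "(real^2) set \<Rightarrow> (real^2) set set" where
  "homothety_class A = {B. \<exists>c t. c > 0 \<and> B = (\<lambda>x. t + c *\<^sub>R x) ` A}"

definition homothety_type :: "(real^2) set set \<Rightarrow> bool" where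
  "homothety_type \<Gamma> \<longleftrightarrow> (\<exists>A. nc_set A \<and> \<Gamma> = homothety_class A)"

definition large_approx :: "real \<Rightarrow> (real^2) set set \<Rightarrow> (real^2) set \<Rightarrow> bool" where
  "large_approx r \<Gamma> K \<longleftrightarrow>
     diameter K > r \<and>
     (\<exists>G\<in>\<Gamma>. diameter G = 1 \<and>
        hausdorff_dist ((\<lambda>x. (1 / diameter K) *\<^sub>R x) ` K) G < 1 / r)"

end

theory Submission
  imports Defs
begin

text \<open>If K has diameter D and K/D is close to G, then for K' near K with diameter D',
  K'/D' = (D/D') (K/D) + (K' - K)/D' is close to (D/D') G, and hence to a translate of G,
  since a set of diameter 1 moves by at most |D/D' - 1| under scaling by D/D' about one
  of its points.  As the diameter of K is large, D/D' is close to 1 and all errors are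
  small.\<close>

lemma hausdorff_dist_commute: "hausdorff_dist A B = hausdorff_dist B A"
  by (simp add: hausdorff_dist_def max.commute)

lemma hausdorff_dist_lessE:
  fixes A B :: "'a::metric_space set"
  assumes "bounded A" "B \<noteq> {}" "hausdorff_dist A B < e" "a \<in> A"
  obtains b where "b \<in> B" "dist a b < e"
proof -
  obtain b0 where "b0 \<in> B" using assms(2) by blast
  obtain R where R: "\<forall>x\<in>A. dist b0 x \<le> R"
    using assms(1) bounded_any_center by blast
  have "bdd_above ((\<lambda>x. infdist x B) ` A)"
  proof (rule bdd_aboveI2)
    fix x assume "x \<in> A"
    have "infdist x B \<le> dist b0 x"
      using infdist_le[OF \<open>b0 \<in> B\<close>, of x] by (metis dist_commute)
    also have "\<dots> \<le> R"
      using R \<open>x \<in> A\<close> by blast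
    finally show "infdist x B \<le> R" .
  qed
  from cSUP_upper[OF assms(4) this] have "infdist a B < e"
    using assms(3) unfolding hausdorff_dist_def by linarith
  then have "(INF b\<in>B. dist a b) < e"
    using infdist_notempty[OF assms(2)] by simp
  moreover have "bdd_below (dist a ` B)"
    by (rule bdd_belowI2[where m=0]) simp
  ultimately have "\<exists>b\<in>B. dist a b < e"
    using cINF_less_iff[OF assms(2)] by blast
  then show ?thesis
    using that by blast
qed

lemma hausdorff_dist_le:
  fixes A B :: "'a::metric_space set"
  assumes "A \<noteq> {}" "B \<noteq> {}"
    and "\<And>a. a \<in> A \<Longrightarrow> \<exists>b\<in>B. dist a b \<le> e" "\<And>b. b \<in> B \<Longrightarrow> \<exists>a\<in>A. dist b a \<le> e"
  shows "hausdorff_dist A B \<le> e"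
  unfolding hausdorff_dist_def using assms
  by (auto intro!: cSUP_least intro: infdist_le2)

lemma diameter_le_hausdorff:
  fixes K K' :: "'a::real_normed_vector set"
  assumes "bounded K" "bounded K'" "K \<noteq> {}" "K' \<noteq> {}" "hausdorff_dist K K' < d"
  shows "diameter K \<le> diameter K' + 2 * d"
proof (rule diameter_le)
  fix x y assume "x \<in> K" "y \<in> K"
  then obtain x' y' where "x' \<in> K'" "dist x x' < d" "y' \<in> K'" "dist y y' < d"
    using hausdorff_dist_lessE[OF assms(1,4,5)] by metis
  moreover have "dist x' y' \<le> diameter K'"
    using diameter_bounded_bound[OF assms(2)] \<open>x' \<in> K'\<close> \<open>y' \<in> K'\<close> .
  moreover have "dist x y \<le> dist x x' + dist x' y' + dist y y'"
    by (metis add_mono dist_commute dist_triangle dist_triangle_le order_refl)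
  ultimately show "norm (x - y) \<le> diameter K' + 2 * d"
    by (simp add: dist_norm)
qed (use assms(3) in simp)

lemma abs_diameter_diff_le_hausdorff:
  fixes K K' :: "'a::real_normed_vector set"
  assumes "bounded K" "bounded K'" "K \<noteq> {}" "K' \<noteq> {}" "hausdorff_dist K K' < d"
  shows "\<bar>diameter K - diameter K'\<bar> \<le> 2 * d"
proof -
  have K'K: "hausdorff_dist K' K < d"
    using assms(5) by (simp add: hausdorff_dist_commute)
  show ?thesis
    using diameter_le_hausdorff[OF assms] diameter_le_hausdorff[OF assms(2,1,4,3) K'K] by linarith
qed

lemma diameter_translate:
  fixes S :: "'a::real_normed_vector set"
  shows "diameter ((\<lambda>x. v + x) ` S) = diameter S"
proof -
  have "(\<lambda>x. v + x) ` S \<times> (\<lambda>x. v + x) ` S = map_prod (\<lambda>x. v + x) (\<lambda>x. v + x) ` (S \<times> S)"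
    by (simp add: map_prod_surj_on)
  then show ?thesis
    unfolding diameter_def by (simp add: image_comp o_def case_prod_beta dist_add_cancel)
qed

lemma dist_rescaled_shifted_le:
  fixes x y p g :: "'a::real_normed_vector" and D D' :: real
  assumes "D > 0" "D' > 0"
  shows "dist ((1/D') *\<^sub>R y) ((D/D' - 1) *\<^sub>R p + g)
           \<le> dist x y / D' + D/D' * dist ((1/D) *\<^sub>R x) g + \<bar>D/D' - 1\<bar> * dist g p"
proof -
  have "(1/D') *\<^sub>R y - ((D/D' - 1) *\<^sub>R p + g)
      = (1/D') *\<^sub>R (y - x) + (D/D') *\<^sub>R ((1/D) *\<^sub>R x - g) + (D/D' - 1) *\<^sub>R (g - p)"
    using assms by (simp add: algebra_simps)
  also have "norm \<dots> \<le> norm ((1/D') *\<^sub>R (y - x)) + norm ((D/D') *\<^sub>R ((1/D) *\<^sub>R x - g))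
                        + norm ((D/D' - 1) *\<^sub>R (g - p))"
    by (meson add_mono norm_triangle_ineq order_trans order_refl)
  finally show ?thesis
    using assms by (simp add: dist_norm norm_minus_commute)
qed

lemma hausdorff_dist_rescale_le:
  fixes K K' G :: "'a::real_normed_vector set" and D D' :: real
  assumes "bounded K" "bounded K'" "bounded G" "K \<noteq> {}" "K' \<noteq> {}" "p \<in> G"
    and "D > 0" "D' > 0"
    and KK': "hausdorff_dist K K' < d"
    and KG: "hausdorff_dist ((\<lambda>x. (1/D) *\<^sub>R x) ` K) G < e"
  shows "hausdorff_dist ((\<lambda>x. (1/D') *\<^sub>R x) ` K') ((\<lambda>g. (D/D' - 1) *\<^sub>R p + g) ` G)
           \<le> d/D' + D/D' * e + \<bar>D/D' - 1\<bar> * diameter G"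
    (is "hausdorff_dist _ _ \<le> ?B")
proof (rule hausdorff_dist_le)
  have K'K: "hausdorff_dist K' K < d"
    using KK' by (simp add: hausdorff_dist_commute)
  have GK: "hausdorff_dist G ((\<lambda>x. (1/D) *\<^sub>R x) ` K) < e"
    using KG by (simp add: hausdorff_dist_commute)
  have bounded_scaled_K: "bounded ((\<lambda>x. (1/D) *\<^sub>R x) ` K)"
    using assms(1) by (simp add: bounded_scaling)
  have close: "dist ((1/D') *\<^sub>R y) ((D/D' - 1) *\<^sub>R p + g) \<le> ?B"
    if "dist x y < d" "dist ((1/D) *\<^sub>R x) g < e" "g \<in> G" for x y g
  proof -
    have "dist g p \<le> diameter G"
      using diameter_bounded_bound[OF assms(3) \<open>g \<in> G\<close> assms(6)] .
    then have "\<bar>D/D' - 1\<bar> * dist g p \<le> \<bar>D/D' - 1\<bar> * diameter G"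
      by (simp add: mult_left_mono)
    moreover have "dist x y / D' \<le> d / D'"
      using that(1) \<open>D' > 0\<close> by (simp add: divide_right_mono)
    moreover have "D/D' * dist ((1/D) *\<^sub>R x) g \<le> D/D' * e"
      using mult_left_mono[OF less_imp_le[OF that(2)], of "D/D'"] \<open>D > 0\<close> \<open>D' > 0\<close> by simp
    ultimately show ?thesis
      using dist_rescaled_shifted_le[OF \<open>D > 0\<close> \<open>D' > 0\<close>, of y p g x] by linarith
  qed
  show "(\<lambda>x. (1/D') *\<^sub>R x) ` K' \<noteq> {}" "(\<lambda>g. (D/D' - 1) *\<^sub>R p + g) ` G \<noteq> {}"
    using assms(5,6) by auto
  show "\<exists>b\<in>(\<lambda>g. (D/D' - 1) *\<^sub>R p + g) ` G. dist a b \<le> ?B"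
    if a: "a \<in> (\<lambda>x. (1/D') *\<^sub>R x) ` K'" for a
  proof -
    obtain y where y: "y \<in> K'" "a = (1/D') *\<^sub>R y" using a by blast
    obtain x where x: "x \<in> K" "dist y x < d"
      using hausdorff_dist_lessE[OF assms(2,4) K'K y(1)] by blast
    obtain g where "g \<in> G" "dist ((1/D) *\<^sub>R x) g < e"
      using hausdorff_dist_lessE[OF bounded_scaled_K _ KG] assms(6) x(1) by blast
    then show ?thesis
      using close[of x y g] x y by (auto simp: dist_commute)
  qed
  show "\<exists>a\<in>(\<lambda>x. (1/D') *\<^sub>R x) ` K'. dist b a \<le> ?B"
    if b: "b \<in> (\<lambda>g. (D/D' - 1) *\<^sub>R p + g) ` G" for b
  proof -
    obtain g where g: "g \<in> G" "b = (D/D' - 1) *\<^sub>R p + g" using b by blast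
    obtain x' where x': "x' \<in> (\<lambda>x. (1/D) *\<^sub>R x) ` K" "dist g x' < e"
      using hausdorff_dist_lessE[OF assms(3) _ GK g(1)] assms(4) by blast
    then obtain x where x: "x \<in> K" "x' = (1/D) *\<^sub>R x" by blast
    obtain y where "y \<in> K'" "dist x y < d"
      using hausdorff_dist_lessE[OF assms(1,5) KK' x(1)] by blast
    then show ?thesis
      using close[of x y g] g x x' by (auto simp: dist_commute)
  qed
qed

lemma approximation_error_lt:
  fixes r d0 s D D' :: real
  assumes "r > 0" "d0 > 0" "s \<ge> 1 + 2*r + 2*d0 + 10*d0*r" "D > s" "\<bar>D - D'\<bar> \<le> 2*d0"
  shows "D' > r" and "d0/D' + D/D' * (1/s) + \<bar>D/D' - 1\<bar> < 1/r"
proof -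
  have "d0*r > 0" using assms(1,2) by simp
  then have D'_big: "D' > 10*d0*r" and "D' > r" "s > 2*r" "s \<ge> 1"
    using assms by linarith+
  then show "D' > r" by simp
  have "D' > 0" using \<open>D' > r\<close> \<open>r > 0\<close> by linarith
  have ratio: "D/D' \<le> 1 + 2*d0/D'"
    using assms(5) \<open>D' > 0\<close> by (simp add: field_simps)
  have "D/D' * (1/s) \<le> (1 + 2*d0/D') * (1/s)"
    using mult_right_mono[OF ratio, of "1/s"] \<open>s \<ge> 1\<close> by simp
  also have "\<dots> \<le> 1/s + 2*d0/D'"
    using \<open>s \<ge> 1\<close> \<open>d0 > 0\<close> \<open>D' > 0\<close> by (simp add: field_simps)
  finally have "D/D' * (1/s) \<le> 1/s + 2*d0/D'" .
  moreover have "\<bar>D/D' - 1\<bar> \<le> 2*d0/D'"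
    using assms(5) \<open>D' > 0\<close> by (simp add: field_simps abs_divide)
  moreover have "5*d0/D' < 1/(2*r)"
    using D'_big \<open>r > 0\<close> \<open>D' > 0\<close> by (simp add: field_simps)
  moreover have "1/s < 1/(2*r)"
    using \<open>s > 2*r\<close> \<open>r > 0\<close> by (simp add: frac_less2)
  moreover have "d0/D' + 2*d0/D' + 2*d0/D' = 5*d0/D'" "1/(2*r) + 1/(2*r) = 1/r"
    by (simp_all add: field_simps)
  ultimately show "d0/D' + D/D' * (1/s) + \<bar>D/D' - 1\<bar> < 1/r"
    by linarith
qed

lemma nc_set_homothety_class:
  assumes "nc_set A" "G \<in> homothety_class A"
  shows "nc_set G"
  using assms unfolding nc_set_def homothety_class_def
  by (auto intro!: compact_continuous_image continuous_intros)

lemma homothety_class_translate: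
  assumes "G \<in> homothety_class A"
  shows "(\<lambda>x. v + x) ` G \<in> homothety_class A"
proof -
  obtain c t where "c > 0" "G = (\<lambda>x. t + c *\<^sub>R x) ` A"
    using assms unfolding homothety_class_def by blast
  then show ?thesis
    unfolding homothety_class_def
    by (intro CollectI exI[of _ c] exI[of _ "v + t"]) (auto simp: image_comp o_def add.assoc)
qed

lemma homothety_approx_transfer:
  fixes K K' :: "(real^2) set"
  defines "D \<equiv> diameter K" and "D' \<equiv> diameter K'"
  assumes "homothety_type \<Gamma>" "nc_set K" "nc_set K'" "D > 0" "D' > 0"
    and "hausdorff_dist K K' < d"
    and "G \<in> \<Gamma>" "diameter G = 1" "hausdorff_dist ((\<lambda>x. (1/D) *\<^sub>R x) ` K) G < e"
  shows "\<exists>G'\<in>\<Gamma>. diameter G' = 1 \<and>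
           hausdorff_dist ((\<lambda>x. (1/D') *\<^sub>R x) ` K') G' \<le> d/D' + D/D' * e + \<bar>D/D' - 1\<bar>"
proof -
  obtain A where A: "nc_set A" "\<Gamma> = homothety_class A"
    using assms(3) unfolding homothety_type_def by blast
  then have "nc_set G" using nc_set_homothety_class \<open>G \<in> \<Gamma>\<close> by blast
  then obtain p where "p \<in> G" unfolding nc_set_def by blast
  have "hausdorff_dist ((\<lambda>x. (1/D') *\<^sub>R x) ` K') ((\<lambda>g. (D/D' - 1) *\<^sub>R p + g) ` G)
          \<le> d/D' + D/D' * e + \<bar>D/D' - 1\<bar> * diameter G"
    using assms \<open>nc_set G\<close> \<open>p \<in> G\<close> unfolding nc_set_def
    by (intro hausdorff_dist_rescale_le) (auto intro: compact_imp_bounded)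
  moreover have "(\<lambda>g. (D/D' - 1) *\<^sub>R p + g) ` G \<in> \<Gamma>"
    using homothety_class_translate A(2) \<open>G \<in> \<Gamma>\<close> by blast
  ultimately show ?thesis
    using \<open>diameter G = 1\<close> diameter_translate by (metis mult.right_neutral)
qed

theorem mainTheorem5:
  fixes r d0 :: real
  assumes "r > 0" and "d0 > 0"
  shows "\<exists>s0::real. \<forall>s\<ge>s0. \<forall>\<Gamma> K K'.
           homothety_type \<Gamma> \<longrightarrow> nc_set K \<longrightarrow> nc_set K' \<longrightarrow>
           hausdorff_dist K K' < d0 \<longrightarrow>
           large_approx s \<Gamma> K \<longrightarrow> large_approx r \<Gamma> K'"
proof (intro exI[of _ "1 + 2*r + 2*d0 + 10*d0*r"] allI impI)
  fix s \<Gamma> and K K' :: "(real^2) set"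
  assume s: "s \<ge> 1 + 2*r + 2*d0 + 10*d0*r" and "homothety_type \<Gamma>"
    and K: "nc_set K" and K': "nc_set K'" and KK': "hausdorff_dist K K' < d0"
    and "large_approx s \<Gamma> K"
  define D D' where "D = diameter K" and "D' = diameter K'"
  obtain G where "D > s" "G \<in> \<Gamma>" "diameter G = 1"
    and KG: "hausdorff_dist ((\<lambda>x. (1/D) *\<^sub>R x) ` K) G < 1/s"
    using \<open>large_approx s \<Gamma> K\<close> unfolding large_approx_def D_def by auto
  have "\<bar>D - D'\<bar> \<le> 2*d0"
    using abs_diameter_diff_le_hausdorff[of K K' d0] K K' KK' unfolding D_def D'_def nc_set_def
    by (simp add: compact_imp_bounded)
  note error = approximation_error_lt[OF assms s \<open>D > s\<close> this]
  have "D > 0"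
    using \<open>D > s\<close> s assms by (smt (verit) mult_pos_pos)
  then obtain G' where "G' \<in> \<Gamma>" "diameter G' = 1"
    "hausdorff_dist ((\<lambda>x. (1/D') *\<^sub>R x) ` K') G' \<le> d0/D' + D/D' * (1/s) + \<bar>D/D' - 1\<bar>"
    using homothety_approx_transfer[of \<Gamma> K K' d0 G "1/s"] \<open>homothety_type \<Gamma>\<close> K K' KK'
      \<open>G \<in> \<Gamma>\<close> \<open>diameter G = 1\<close> KG error(1) assms(1)
    unfolding D_def D'_def by auto
  then show "large_approx r \<Gamma> K'"
    unfolding large_approx_def D'_def[symmetric] using error by fastforce
qed

end
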